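(* The restriction $\lambda$ of the Lebesgue measure on $\mathbb R$ to the lattice of open subsets of the Sorgenfrey line $\mathbb R_\ell$ is a continuous valuation.
   Context: The Sorgenfrey line $\mathbb R_\ell$ is $\mathbb R$ with the topology generated by the half-open intervals $[a,b[$, $a<b$ (its open sets are Lebesgue measurable). A continuous valuation is a map $\nu:\mathcal OX\to[0,\infty]$ with $\nu(\emptyset)=0$, monotone, modular, and preserving suprema of directed families of open sets. *)

theory Defs
  imports "HOL-Analysis.Analysis"
begin

definition sorgenfrey :: "real topology" where
  "sorgenfrey = topology_generated_by {{a..<b} | a b. a < b}"

definition directed_family :: "'a set set \<Rightarrow> bool" where
  "directed_family D \<longleftrightarrow> D \<noteq> {} \<and> (\<forall>U\<in>D. \<forall>V\<in>D. \<exists>W\<in>D. U \<subseteq> W \<and> V \<subseteq> W)"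

text \<open>Only its values on open sets of X matter.\<close>
definition continuous_valuation :: "'a topology \<Rightarrow> ('a set \<Rightarrow> ennreal) \<Rightarrow> bool" where
  "continuous_valuation X \<nu> \<longleftrightarrow>
     \<nu> {} = 0
   \<and> (\<forall>U V. openin X U \<and> openin X V \<and> U \<subseteq> V \<longrightarrow> \<nu> U \<le> \<nu> V)
   \<and> (\<forall>U V. openin X U \<and> openin X V \<longrightarrow> \<nu> U + \<nu> V = \<nu> (U \<union> V) + \<nu> (U \<inter> V))
   \<and> (\<forall>D. directed_family D \<and> (\<forall>U\<in>D. openin X U) \<longrightarrow> \<nu> (\<Union>D) = (SUP U\<in>D. \<nu> U))"

end

theory Submission
  imports Defs
begin

text \<open>Every Sorgenfrey-open set contains, with each of its points x, some interval [x, b x[.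
  Of a family of such intervals, the points x lying in no open interval ]y, b y[ have
  pairwise disjoint intervals [x, b x[, so there are only countably many of them, and the
  remaining points are covered by countably many ]y, b y[ by the Lindelof property of the
  Euclidean line. Hence the Sorgenfrey line is hereditarily Lindelof: its open sets are
  countable unions of half-open intervals, hence Lebesgue measurable, and a directed union
  of open sets is the union of an increasing sequence drawn from the family, so continuity
  of the measure from below yields preservation of directed suprema.\<close>

lemma openin_sorgenfrey_halfopen:
  assumes "openin sorgenfrey U" "x \<in> U"
  shows "\<exists>b>x. {x..<b} \<subseteq> U"
proof -
  have "generate_topology_on {{a..<b} | a b. a < (b::real)} U"
    using assms(1) unfolding sorgenfrey_def by (rule openin_topology_generated_by)
  then show ?thesis
    using assms(2)
  proof (induction arbitrary: x rule: generate_topology_on.induct)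
    case Empty
    then show ?case by simp
  next
    case (Int S T)
    then obtain b1 b2 where "b1 > x" "{x..<b1} \<subseteq> S" "b2 > x" "{x..<b2} \<subseteq> T"
      by blast
    then show ?case by (intro exI[of _ "min b1 b2"]) auto
  next
    case (UN K)
    then show ?case by blast
  next
    case (Basis S)
    then show ?case by auto
  qed
qed

lemma openin_sorgenfrey_atLeastLessThan: "openin sorgenfrey {a..<b}"
proof (cases "a < b")
  case True
  then show ?thesis
    unfolding sorgenfrey_def
    by (auto intro: openin_topology_generated_by_iff[THEN iffD2] generate_topology_on.Basis)
qed simp

lemma countable_uncovered_left_endpoints:
  fixes b :: "real \<Rightarrow> real"
  assumes "\<And>x. x \<in> W \<Longrightarrow> x < b x"
  shows "countable (W - (\<Union>x\<in>W. {x<..<b x}))"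
proof -
  define R where "R = W - (\<Union>x\<in>W. {x<..<b x})"
  have "\<forall>x\<in>R. \<exists>r\<in>\<rat>. x < r \<and> r < b x"
    using assms Rats_dense_in_real unfolding R_def by blast
  then obtain q where q: "\<And>x. x \<in> R \<Longrightarrow> q x \<in> \<rat> \<and> x < q x \<and> q x < b x"
    by metis
  have q_less: "q x < q y" if "x \<in> R" "y \<in> R" "x < y" for x y
  proof -
    have "y \<notin> {x<..<b x}"
      using that unfolding R_def by blast
    then show ?thesis
      using q[OF that(1)] q[OF that(2)] \<open>x < y\<close> by auto
  qed
  have "inj_on q R"
    by (rule linorder_inj_onI) (auto dest: q_less)
  moreover have "countable (q ` R)"
    using q countable_rat countable_subset[of "q ` R" \<rat>] by blast
  ultimately show ?thesis
    unfolding R_def[symmetric] by (rule countable_image_inj_on[rotated])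
qed

lemma sorgenfrey_hereditarily_Lindelof:
  assumes "\<And>U. U \<in> F \<Longrightarrow> openin sorgenfrey U"
  obtains F' where "F' \<subseteq> F" "countable F'" "\<Union>F' = \<Union>F"
proof -
  define W where "W = \<Union>F"
  have "\<forall>x\<in>W. \<exists>c U. x < c \<and> U \<in> F \<and> {x..<c} \<subseteq> U"
    using assms openin_sorgenfrey_halfopen unfolding W_def by blast
  from bchoice[OF this] obtain b where "\<forall>x\<in>W. \<exists>U. x < b x \<and> U \<in> F \<and> {x..<b x} \<subseteq> U"
    by blast
  from bchoice[OF this] obtain V where cover: "\<forall>x\<in>W. x < b x \<and> V x \<in> F \<and> {x..<b x} \<subseteq> V x"
    by blast
  obtain G where G: "G \<subseteq> (\<lambda>x. {x<..<b x}) ` W" "countable G"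
    "\<Union>G = (\<Union>x\<in>W. {x<..<b x})"
    using Lindelof[of "(\<lambda>x. {x<..<b x}) ` W"] by (metis imageE open_greaterThanLessThan)
  then obtain C where C: "countable C" "C \<subseteq> W" "G = (\<lambda>x. {x<..<b x}) ` C"
    using countable_subset_image[of G "\<lambda>x. {x<..<b x}" W] by blast
  define R where "R = W - (\<Union>x\<in>W. {x<..<b x})"
  have "countable R"
    unfolding R_def using cover by (intro countable_uncovered_left_endpoints) blast
  show ?thesis
  proof
    show subfamily: "V ` (C \<union> R) \<subseteq> F"
      using cover C(2) unfolding R_def by auto
    show "countable (V ` (C \<union> R))"
      using C(1) \<open>countable R\<close> by auto
    have "W \<subseteq> \<Union>(V ` (C \<union> R))"
    proof
      fix y assume "y \<in> W"
      show "y \<in> \<Union>(V ` (C \<union> R))"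
      proof (cases "y \<in> R")
        case True
        have "y \<in> V y"
          using cover \<open>y \<in> W\<close> by fastforce
        with True show ?thesis by blast
      next
        case False
        then have "y \<in> \<Union>G"
          using \<open>y \<in> W\<close> G(3) unfolding R_def by blast
        then obtain x where "x \<in> C" "y \<in> {x<..<b x}"
          using C(3) by blast
        then show ?thesis using cover C(2) by fastforce
      qed
    qed
    with subfamily show "\<Union>(V ` (C \<union> R)) = \<Union>F"
      unfolding W_def by blast
  qed
qed

lemma openin_sorgenfrey_sets_lebesgue:
  assumes "openin sorgenfrey U"
  shows "U \<in> sets lebesgue"
proof -
  define F where "F = {{a..<b} | a b. {a..<b} \<subseteq> U}"
  have "U \<subseteq> \<Union>F"
  proof
    fix x assume "x \<in> U"
    then obtain b where "x < b" "{x..<b} \<subseteq> U"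
      using openin_sorgenfrey_halfopen[OF assms] by blast
    then show "x \<in> \<Union>F"
      unfolding F_def by (intro UnionI[of "{x..<b}"]) auto
  qed
  then have "\<Union>F = U"
    unfolding F_def by blast
  have "\<And>S. S \<in> F \<Longrightarrow> openin sorgenfrey S"
    unfolding F_def using openin_sorgenfrey_atLeastLessThan by blast
  then obtain F' where "F' \<subseteq> F" "countable F'" "\<Union>F' = \<Union>F"
    by (rule sorgenfrey_hereditarily_Lindelof)
  moreover have "\<Union>F' \<in> sets lebesgue"
    using \<open>F' \<subseteq> F\<close> \<open>countable F'\<close> by (intro sets.countable_Union) (auto simp: F_def)
  ultimately show ?thesis
    using \<open>\<Union>F = U\<close> by simp
qed

lemma directed_family_countable_chain:
  assumes "directed_family D" "countable F" "F \<subseteq> D"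
  obtains V :: "nat \<Rightarrow> 'a set" where "incseq V" "range V \<subseteq> D" "\<Union>F \<subseteq> (\<Union>n. V n)"
proof -
  obtain U0 where "U0 \<in> D"
    using assms(1) unfolding directed_family_def by auto
  have upper_bound: "\<exists>W\<in>D. U \<subseteq> W \<and> U' \<subseteq> W" if "U \<in> D" "U' \<in> D" for U U'
    using assms(1) that unfolding directed_family_def by blast
  define f where "f = from_nat_into (insert U0 F)"
  have f: "f n \<in> D" for n
    using from_nat_into[of "insert U0 F" n] \<open>U0 \<in> D\<close> assms(3) unfolding f_def by auto
  have "\<exists>V. \<forall>n. (V n \<in> D \<and> f n \<subseteq> V n) \<and> V n \<subseteq> V (Suc n)"
  proof (rule dependent_nat_choice[where P = "\<lambda>n W. W \<in> D \<and> f n \<subseteq> W" and Q = "\<lambda>_ W W'. W \<subseteq> W'"])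
    show "\<exists>W. W \<in> D \<and> f 0 \<subseteq> W"
      using f[of 0] by blast
    show "\<exists>W'. (W' \<in> D \<and> f (Suc n) \<subseteq> W') \<and> W \<subseteq> W'" if "W \<in> D \<and> f n \<subseteq> W" for W n
      using upper_bound[of W "f (Suc n)"] that f[of "Suc n"] by blast
  qed
  then obtain V where V: "\<And>n. V n \<in> D" "\<And>n. f n \<subseteq> V n" "\<And>n. V n \<subseteq> V (Suc n)"
    by blast
  have "range f = insert U0 F"
    unfolding f_def using assms(2) by (intro range_from_nat_into) auto
  then have "\<Union>F \<subseteq> (\<Union>n. f n)"
    by auto
  also have "\<dots> \<subseteq> (\<Union>n. V n)"
    using V(2) by (rule UN_mono[OF subset_refl])
  finally have "\<Union>F \<subseteq> (\<Union>n. V n)" .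
  moreover have "incseq V"
    using V(3) by (rule incseq_SucI)
  moreover have "range V \<subseteq> D"
    using V(1) by auto
  ultimately show ?thesis
    using that by simp
qed

lemma emeasure_Union_directed_family:
  assumes "directed_family D" "D \<subseteq> sets M"
    and "countable F" "F \<subseteq> D" "\<Union>F = \<Union>D"
  shows "emeasure M (\<Union>D) = (SUP U\<in>D. emeasure M U)"
proof -
  obtain V where V: "incseq V" "range V \<subseteq> D" "\<Union>F \<subseteq> (\<Union>n. V n)"
    using directed_family_countable_chain[OF assms(1,3,4)] .
  have D_eq: "\<Union>D = (\<Union>n. V n)"
  proof
    show "\<Union>D \<subseteq> (\<Union>n. V n)"
      using V(3) assms(5) by simp
    show "(\<Union>n. V n) \<subseteq> \<Union>D"
      using V(2) by (rule Union_mono)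
  qed
  have "emeasure M (\<Union>D) = (SUP n. emeasure M (V n))"
    unfolding D_eq using V(1,2) assms(2) by (intro SUP_emeasure_incseq[symmetric]) auto
  also have "\<dots> \<le> (SUP U\<in>D. emeasure M U)"
    using V(2) by (intro SUP_least SUP_upper) auto
  finally have "emeasure M (\<Union>D) \<le> (SUP U\<in>D. emeasure M U)" .
  moreover have "\<Union>D \<in> sets M"
    unfolding D_eq using V(2) assms(2) by auto
  then have "(SUP U\<in>D. emeasure M U) \<le> emeasure M (\<Union>D)"
    by (intro SUP_least emeasure_mono) auto
  ultimately show ?thesis by (rule antisym)
qed

theorem corollary4p8:
  shows "continuous_valuation sorgenfrey (\<lambda>U. emeasure lebesgue U)"
  unfolding continuous_valuation_def
proof (intro conjI allI impI)
  fix U V :: "real set"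
  assume "openin sorgenfrey U \<and> openin sorgenfrey V \<and> U \<subseteq> V"
  then show "emeasure lebesgue U \<le> emeasure lebesgue V"
    by (intro emeasure_mono) (auto intro: openin_sorgenfrey_sets_lebesgue)
next
  fix U V :: "real set"
  assume "openin sorgenfrey U \<and> openin sorgenfrey V"
  then show "emeasure lebesgue U + emeasure lebesgue V =
      emeasure lebesgue (U \<union> V) + emeasure lebesgue (U \<inter> V)"
    by (intro emeasure_Un_Int) (auto intro: openin_sorgenfrey_sets_lebesgue)
next
  fix D :: "real set set"
  assume D: "directed_family D \<and> (\<forall>U\<in>D. openin sorgenfrey U)"
  then obtain F where F: "F \<subseteq> D" "countable F" "\<Union>F = \<Union>D"
    using sorgenfrey_hereditarily_Lindelof[of D] by blast
  have "D \<subseteq> sets lebesgue"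
    using D openin_sorgenfrey_sets_lebesgue by blast
  with D F show "emeasure lebesgue (\<Union>D) = (SUP U\<in>D. emeasure lebesgue U)"
    by (intro emeasure_Union_directed_family[of D lebesgue F]) auto
qed simp

end
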